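(* Let $d,K\ge2$, $a^\dagger\in\{1,\dots,K\}$, and for each arm $a$ let $\hat\theta_a\in\mathbb{R}^d$, $V_a\in\mathbb{R}^{d\times d}$ symmetric positive definite, $\beta_a>0$, and $\mathcal C_a=\{\theta\in\mathbb{R}^d:\|\theta-\hat\theta_a\|_{V_a}\le\beta_a\}$. Fix $x^\dagger\in\mathbb{R}^d$ and $\xi>0$. The (convex) problem $$\min_{y\in\mathbb{R}^d}\ \|y\|_2\quad\text{s.t.}\quad \max_{a\neq a^\dagger}\ \max_{\theta\in\mathcal C_a}\ \langle x^\dagger+y,\ \theta-\hat\theta_{a^\dagger}\rangle\le-\xi$$ is feasible if and only if $\hat\theta_{a^\dagger}\notin\mathrm{Conv}\big(\bigcup_{a\neq a^\dagger}\mathcal C_a\big)$.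
   Context: $\|x\|_V=\sqrt{x^\top Vx}$; $\mathrm{Conv}$ denotes the convex hull. This is the convex relaxation of the attacker's problem of perturbing a single context $x^\dagger$ so that LinUCB (with confidence ellipsoids $\mathcal C_a$ centered at least-squares estimates $\hat\theta_a$) prefers arm $a^\dagger$ by margin $\xi$. *)

theory Defs
  imports "HOL-Analysis.Analysis"
begin

definition vnorm :: "real^'n^'n \<Rightarrow> real^'n \<Rightarrow> real" where
  "vnorm V x = sqrt (x \<bullet> (V *v x))"

definition sym_pos_def :: "real^'n^'n \<Rightarrow> bool" where
  "sym_pos_def V \<longleftrightarrow> transpose V = V \<and> (\<forall>x. x \<noteq> 0 \<longrightarrow> x \<bullet> (V *v x) > 0)"

definition conf_set :: "real^'n^'n \<Rightarrow> real^'n \<Rightarrow> real \<Rightarrow> (real^'n) set" where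
  "conf_set V th \<beta> = {\<theta>. vnorm V (\<theta> - th) \<le> \<beta>}"

end

theory Submission
  imports Defs
begin

text \<open>The feasible perturbations y correspond, via w = x\<dagger> + y, to directions w that separate
  \<open>\<theta>\<^sub>a\<^sub>\<dagger>\<close> from every other confidence ellipsoid with margin \<open>\<xi>\<close>. Such a w exists exactly when
  \<open>\<theta>\<^sub>a\<^sub>\<dagger>\<close> lies outside the convex hull: a closed half-space containing the ellipsoids contains
  their hull, and conversely the hull of finitely many ellipsoids is compact, so a point outside
  it is strictly separated by a hyperplane, and rescaling the normal turns the positive gap into
  the margin \<open>\<xi>\<close>.\<close>

lemma quadratic_form_scaleR:
  "((r::real) *\<^sub>R x) \<bullet> ((V::real^'n^'n) *v (r *\<^sub>R x)) = r\<^sup>2 * (x \<bullet> (V *v x))"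
  by (simp add: matrix_vector_mult_scaleR power2_eq_square)

lemma pos_definite_quadratic_form_lower_bound:
  fixes V :: "real^'n^'n"
  assumes pos: "\<And>x. x \<noteq> 0 \<Longrightarrow> x \<bullet> (V *v x) > 0"
  obtains c where "c > 0" "\<And>x. c * (norm x)\<^sup>2 \<le> x \<bullet> (V *v x)"
proof -
  have "(axis undefined 1 :: real^'n) \<in> sphere 0 1"
    by (simp add: norm_axis_1)
  then have "sphere (0::real^'n) 1 \<noteq> {}"
    by blast
  moreover have "continuous_on (sphere 0 1) (\<lambda>x::real^'n. x \<bullet> (V *v x))"
    by (intro continuous_intros)
  ultimately obtain x0 where x0: "x0 \<in> sphere 0 1"
    and x0_min: "\<And>u. u \<in> sphere 0 1 \<Longrightarrow> x0 \<bullet> (V *v x0) \<le> u \<bullet> (V *v u)"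
    using continuous_attains_inf[OF compact_sphere] by blast
  have "x0 \<bullet> (V *v x0) > 0"
    using x0 by (intro pos) auto
  moreover have "(x0 \<bullet> (V *v x0)) * (norm x)\<^sup>2 \<le> x \<bullet> (V *v x)" for x
  proof (cases "x = 0")
    case False
    define u where "u = (1 / norm x) *\<^sub>R x"
    have "u \<in> sphere 0 1" and x_eq: "x = norm x *\<^sub>R u"
      using False by (simp_all add: u_def)
    then have "x \<bullet> (V *v x) = (norm x)\<^sup>2 * (u \<bullet> (V *v u))"
      by (metis quadratic_form_scaleR)
    with x0_min[OF \<open>u \<in> sphere 0 1\<close>] show ?thesis
      by (simp add: mult.commute mult_right_mono)
  qed simp
  ultimately show thesis
    using that by blast
qed

lemma compact_conf_set:
  assumes "sym_pos_def (V::real^'n^'n)"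
  shows "compact (conf_set V th \<beta>)"
proof -
  obtain c where c: "c > 0" and lower: "\<And>x. c * (norm x)\<^sup>2 \<le> x \<bullet> (V *v x)"
    using pos_definite_quadratic_form_lower_bound assms unfolding sym_pos_def_def by blast
  have "closed (conf_set V th \<beta>)"
    unfolding conf_set_def vnorm_def matrix_vector_mult_diff_distrib
    by (intro closed_Collect_le continuous_intros)
  moreover have "conf_set V th \<beta> \<subseteq> cball th (sqrt (\<beta>\<^sup>2 / c))"
  proof
    fix t assume "t \<in> conf_set V th \<beta>"
    then have "(t - th) \<bullet> (V *v (t - th)) \<le> \<beta>\<^sup>2"
      by (simp add: conf_set_def vnorm_def sqrt_le_D)
    then have "(norm (t - th))\<^sup>2 \<le> \<beta>\<^sup>2 / c"
      using lower[of "t - th"] c by (simp add: pos_le_divide_eq mult.commute)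
    then show "t \<in> cball th (sqrt (\<beta>\<^sup>2 / c))"
      by (simp add: dist_norm norm_minus_commute real_le_rsqrt)
  qed
  ultimately show ?thesis
    by (metis bounded_cball bounded_subset compact_eq_bounded_closed)
qed

lemma margin_separation_iff_notin_convex_hull:
  fixes S :: "'a::euclidean_space set"
  assumes "compact S" and "\<xi> > 0"
  shows "(\<exists>w. \<forall>\<theta>\<in>S. w \<bullet> (\<theta> - p) \<le> - \<xi>) \<longleftrightarrow> p \<notin> convex hull S"
proof
  assume "\<exists>w. \<forall>\<theta>\<in>S. w \<bullet> (\<theta> - p) \<le> - \<xi>"
  then obtain w where w: "\<forall>\<theta>\<in>S. w \<bullet> (\<theta> - p) \<le> - \<xi>"
    by blast
  let ?H = "{\<theta>. w \<bullet> \<theta> \<le> w \<bullet> p - \<xi>}"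
  have "convex hull S \<subseteq> ?H"
    using w by (intro hull_minimal) (auto simp: inner_diff_right convex_halfspace_le)
  moreover have "p \<notin> ?H"
    using assms(2) by simp
  ultimately show "p \<notin> convex hull S"
    by blast
next
  assume "p \<notin> convex hull S"
  moreover have "closed (convex hull S)"
    using assms(1) by (simp add: compact_convex_hull compact_imp_closed)
  ultimately obtain w b where wp: "w \<bullet> p < b" and wS: "\<forall>x\<in>convex hull S. b < w \<bullet> x"
    using separating_hyperplane_closed_point[OF convex_convex_hull] by blast
  define t where "t = \<xi> / (b - w \<bullet> p)"
  have "t > 0" and t_gap: "t * (b - w \<bullet> p) = \<xi>"
    using wp assms(2) by (simp_all add: t_def)
  have "(- t *\<^sub>R w) \<bullet> (\<theta> - p) \<le> - \<xi>" if "\<theta> \<in> S" for \<theta>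
  proof -
    have "b - w \<bullet> p < w \<bullet> (\<theta> - p)"
      using wS hull_subset[of S convex] that by (force simp: inner_diff_right)
    then show ?thesis
      using mult_strict_left_mono[of _ _ t] \<open>t > 0\<close> t_gap by fastforce
  qed
  then show "\<exists>w. \<forall>\<theta>\<in>S. w \<bullet> (\<theta> - p) \<le> - \<xi>"
    by blast
qed

theorem mainTheorem2:
  fixes K :: nat and adag :: nat
    and thhat :: "nat \<Rightarrow> real^'d" and V :: "nat \<Rightarrow> real^'d^'d" and \<beta> :: "nat \<Rightarrow> real"
    and xdag :: "real^'d" and \<xi> :: real
  assumes "CARD('d) \<ge> 2" and "K \<ge> 2" and "adag \<in> {1..K}"
    and "\<And>a. a \<in> {1..K} \<Longrightarrow> sym_pos_def (V a)"
    and "\<And>a. a \<in> {1..K} \<Longrightarrow> \<beta> a > 0"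
    and "\<xi> > 0"
  shows "(\<exists>y :: real^'d. \<forall>a \<in> {1..K} - {adag}. \<forall>\<theta> \<in> conf_set (V a) (thhat a) (\<beta> a).
            (xdag + y) \<bullet> (\<theta> - thhat adag) \<le> - \<xi>)
         \<longleftrightarrow> thhat adag \<notin> convex hull (\<Union>a \<in> {1..K} - {adag}. conf_set (V a) (thhat a) (\<beta> a))"
  (is "?feasible \<longleftrightarrow> _")
proof -
  let ?S = "\<Union>a \<in> {1..K} - {adag}. conf_set (V a) (thhat a) (\<beta> a)"
  have "compact ?S"
    using assms(4) by (intro compact_UN compact_conf_set) auto
  have "?feasible \<longleftrightarrow> (\<exists>w. \<forall>\<theta>\<in>?S. w \<bullet> (\<theta> - thhat adag) \<le> - \<xi>)"
  proof
    assume "\<exists>w. \<forall>\<theta>\<in>?S. w \<bullet> (\<theta> - thhat adag) \<le> - \<xi>"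
    then obtain w where "\<forall>\<theta>\<in>?S. w \<bullet> (\<theta> - thhat adag) \<le> - \<xi>"
      by blast
    then show ?feasible
      by (intro exI[of _ "w - xdag"]) auto
  qed blast
  also have "\<dots> \<longleftrightarrow> thhat adag \<notin> convex hull ?S"
    using margin_separation_iff_notin_convex_hull[OF \<open>compact ?S\<close> \<open>\<xi> > 0\<close>] .
  finally show ?thesis .
qed

end
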